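(* Let $p\geq 1$ be an integer and define $\mathcal{G}_p:[-1,1]\times[-1,1]\to\mathbb{R}$ by $$\mathcal{G}_p(x,y)=\int_{-1}^1 \mathrm{ReLU}^p(z-x)\,\mathrm{ReLU}^p(z-y)\,dz .$$ Then, in the sense of distributions in $x$ (for fixed $y$), $$\frac{\partial^{2p+2}}{\partial x^{2p+2}}\mathcal{G}_p(x,y)=(-1)^{p-1}(p!)^2\,\delta(x-y),$$ where $\delta$ is the Dirac distribution.
   Context: $\mathrm{ReLU}^p(z)=(\max\{0,z\})^p$ for $z\in\mathbb{R}$. *)

theory Defs
  imports "HOL-Analysis.Analysis"
begin

definition ReLU_pow :: "nat \<Rightarrow> real \<Rightarrow> real" where
  "ReLU_pow p z = (max 0 z) ^ p"

definition G :: "nat \<Rightarrow> real \<Rightarrow> real \<Rightarrow> real" where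
  "G p x y = integral {-1..1} (\<lambda>z. ReLU_pow p (z - x) * ReLU_pow p (z - y))"

definition test_fun :: "(real \<Rightarrow> real) \<Rightarrow> bool" where
  "test_fun \<phi> \<longleftrightarrow> (\<forall>k x. ((deriv ^^ k) \<phi>) differentiable (at x)) \<and>
     (\<exists>a b. -1 < a \<and> b < 1 \<and> (\<forall>x. x \<notin> {a..b} \<longrightarrow> \<phi> x = 0))"

end

(* By Fubini, the integral of G p x y against \<psi> = \<phi>^(2p+2) equals
   \<integral> ReLU^p(z - y) (\<integral> ReLU^p(z - x) \<psi>(x) dx) dz.
   Since ReLU^p(z - x) = (z - x)^p for x \<le> z, p + 1 integrations by parts turn the inner
   integral into p! \<phi>^(p+1)(z) (Cauchy's formula for repeated integration), and p + 1 more
   against ReLU^p(z - y) give (-1)^(p+1) p! \<phi>(y). All boundary terms vanish because every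
   derivative of \<phi> vanishes at -1 and 1 and the power factor vanishes at the other end. *)

theory Submission
  imports Defs
begin

lemma higher_deriv_eq_0_on_open:
  fixes f :: "'a::real_normed_field \<Rightarrow> 'a"
  assumes "open S" and "\<And>x. x \<in> S \<Longrightarrow> f x = 0" and "x \<in> S"
  shows "(deriv ^^ k) f x = 0"
  using assms(3)
proof (induction k arbitrary: x)
  case 0
  then show ?case using assms(2) by simp
next
  case (Suc k)
  have "((deriv ^^ k) f has_field_derivative 0) (at x)"
    using has_field_derivative_transform_within_open[OF DERIV_const assms(1) Suc.prems] Suc.IH
    by metis
  then show ?case by (simp add: DERIV_imp_deriv)
qed

lemma test_fun_higher_deriv_has_derivative:
  assumes "test_fun \<phi>"
  shows "((deriv ^^ k) \<phi> has_real_derivative (deriv ^^ Suc k) \<phi> x) (at x)"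
  using assms by (simp add: test_fun_def DERIV_deriv_iff_real_differentiable)

lemma test_fun_higher_deriv_eq_0:
  assumes "test_fun \<phi>" and "x \<notin> {-1<..<1}"
  shows "(deriv ^^ k) \<phi> x = 0"
proof -
  obtain a b where "-1 < a" "b < 1" "\<And>x. x \<notin> {a..b} \<Longrightarrow> \<phi> x = 0"
    using assms(1) unfolding test_fun_def by blast
  then show ?thesis
    using higher_deriv_eq_0_on_open[of "- {a..b}" \<phi> x k] assms(2) by (force simp: open_Compl)
qed

lemma ReLU_pow_nonpos: "p \<ge> 1 \<Longrightarrow> t \<le> 0 \<Longrightarrow> ReLU_pow p t = 0"
  by (simp add: ReLU_pow_def max_def)

lemma ReLU_pow_nonneg: "t \<ge> 0 \<Longrightarrow> ReLU_pow p t = t ^ p"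
  by (simp add: ReLU_pow_def)

lemma continuous_on_ReLU_pow [continuous_intros]:
  "continuous_on S f \<Longrightarrow> continuous_on S (\<lambda>x. ReLU_pow p (f x))"
  unfolding ReLU_pow_def by (intro continuous_intros)

lemma has_integral_power_mult_deriv_chain_upper:
  fixes g :: "nat \<Rightarrow> real \<Rightarrow> real"
  assumes dg: "\<And>k x. (g k has_real_derivative g (Suc k) x) (at x)"
    and g0: "\<And>k. g k c = 0" and "c \<le> z"
  shows "((\<lambda>x. (z - x) ^ p * g (Suc p) x) has_integral fact p * g 0 z) {c..z}"
proof (induction p)
  case 0
  have "(g (Suc 0) has_integral g 0 z - g 0 c) {c..z}"
    using \<open>c \<le> z\<close> dg
    by (intro fundamental_theorem_of_calculus)
      (auto simp: has_real_derivative_iff_has_vector_derivative[symmetric] intro: DERIV_subset)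
  then show ?case using g0 by simp
next
  case (Suc p)
  define F where "F x = (z - x) ^ Suc p * g (Suc p) x" for x
  have "(F has_real_derivative
      (z - x) ^ Suc p * g (Suc (Suc p)) x - Suc p * ((z - x) ^ p * g (Suc p) x)) (at x)" for x
  proof -
    have "((\<lambda>x. (z - x) ^ Suc p) has_real_derivative - (Suc p * (z - x) ^ p)) (at x)"
      by (rule DERIV_cong[OF DERIV_power_Suc[OF DERIV_diff[OF DERIV_const DERIV_ident]]]) simp
    then show ?thesis
      unfolding F_def by (rule DERIV_cong[OF DERIV_mult[OF _ dg]]) (simp add: algebra_simps)
  qed
  then have "((\<lambda>x. (z - x) ^ Suc p * g (Suc (Suc p)) x - Suc p * ((z - x) ^ p * g (Suc p) x))
      has_integral F z - F c) {c..z}"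
    using \<open>c \<le> z\<close>
    by (intro fundamental_theorem_of_calculus)
      (auto simp: has_real_derivative_iff_has_vector_derivative[symmetric] intro: DERIV_subset)
  moreover have "F z = 0" "F c = 0" using g0 by (simp_all add: F_def)
  ultimately have "((\<lambda>x. ((z - x) ^ Suc p * g (Suc (Suc p)) x - Suc p * ((z - x) ^ p * g (Suc p) x))
      + Suc p * ((z - x) ^ p * g (Suc p) x)) has_integral 0 + Suc p * (fact p * g 0 z)) {c..z}"
    by (intro has_integral_add has_integral_mult_right Suc.IH) simp
  then show ?case by (simp add: mult.assoc)
qed

lemma has_integral_power_mult_deriv_chain_lower:
  fixes g :: "nat \<Rightarrow> real \<Rightarrow> real"
  assumes dg: "\<And>k x. (g k has_real_derivative g (Suc k) x) (at x)"
    and g0: "\<And>k. g k d = 0" and "y \<le> d"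
  shows "((\<lambda>x. (x - y) ^ p * g (Suc p) x) has_integral (-1) ^ Suc p * fact p * g 0 y) {y..d}"
proof -
  \<comment> \<open>reduce to the upper version by the reflection x \<mapsto> -x\<close>
  define h where "h k x = (-1) ^ k * g k (-x)" for k x
  have "(h k has_real_derivative h (Suc k) x) (at x)" for k x
    unfolding h_def
    by (rule DERIV_cong[OF DERIV_cmult[OF DERIV_chain2[OF dg DERIV_minus[OF DERIV_ident]]]]) simp
  moreover have "h k (-d) = 0" for k by (simp add: h_def g0)
  ultimately have "((\<lambda>x. (- y - x) ^ p * h (Suc p) x) has_integral fact p * h 0 (- y)) {-d..-y}"
    using \<open>y \<le> d\<close> by (intro has_integral_power_mult_deriv_chain_upper) auto
  then have "((\<lambda>x. (-1) ^ Suc p * ((x - y) ^ p * g (Suc p) x)) has_integral fact p * g 0 y) {y..d}"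
    using has_integral_reflect_real[of "\<lambda>x. (- y - x) ^ p * h (Suc p) x" _ "-y" "-d"]
    by (simp add: h_def mult_ac)
  from has_integral_mult_right[OF this, of "(-1) ^ Suc p"] show ?thesis
    by (simp add: mult_ac)
qed

lemma has_integral_ReLU_pow_mult_deriv_chain_upper:
  fixes g :: "nat \<Rightarrow> real \<Rightarrow> real"
  assumes "p \<ge> 1" and dg: "\<And>k x. (g k has_real_derivative g (Suc k) x) (at x)"
    and g0: "\<And>k. g k c = 0" and "c \<le> z" "z \<le> d"
  shows "((\<lambda>x. ReLU_pow p (z - x) * g (Suc p) x) has_integral fact p * g 0 z) {c..d}"
proof -
  have "((\<lambda>x. ReLU_pow p (z - x) * g (Suc p) x) has_integral fact p * g 0 z) {c..z}"
    by (rule has_integral_eq[OF _ has_integral_power_mult_deriv_chain_upper[of g c z p, OF dg g0 \<open>c \<le> z\<close>]])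
      (simp add: ReLU_pow_nonneg)
  moreover have "((\<lambda>x. ReLU_pow p (z - x) * g (Suc p) x) has_integral 0) {z..d}"
    by (rule has_integral_eq[OF _ has_integral_0]) (use \<open>p \<ge> 1\<close> in \<open>auto simp: ReLU_pow_nonpos\<close>)
  ultimately show ?thesis
    using has_integral_combine[OF \<open>c \<le> z\<close> \<open>z \<le> d\<close>] by fastforce
qed

lemma has_integral_ReLU_pow_mult_deriv_chain_lower:
  fixes g :: "nat \<Rightarrow> real \<Rightarrow> real"
  assumes "p \<ge> 1" and dg: "\<And>k x. (g k has_real_derivative g (Suc k) x) (at x)"
    and g0: "\<And>k. g k d = 0" and "c \<le> y" "y \<le> d"
  shows "((\<lambda>x. ReLU_pow p (x - y) * g (Suc p) x) has_integral (-1) ^ Suc p * fact p * g 0 y) {c..d}"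
proof -
  have "((\<lambda>x. ReLU_pow p (x - y) * g (Suc p) x) has_integral 0) {c..y}"
    by (rule has_integral_eq[OF _ has_integral_0]) (use \<open>p \<ge> 1\<close> in \<open>auto simp: ReLU_pow_nonpos\<close>)
  moreover have "((\<lambda>x. ReLU_pow p (x - y) * g (Suc p) x) has_integral (-1) ^ Suc p * fact p * g 0 y) {y..d}"
    by (rule has_integral_eq[OF _ has_integral_power_mult_deriv_chain_lower[of g d y p, OF dg g0 \<open>y \<le> d\<close>]])
      (simp add: ReLU_pow_nonneg)
  ultimately show ?thesis
    using has_integral_combine[OF \<open>c \<le> y\<close> \<open>y \<le> d\<close>] by fastforce
qed

lemma integral_G_mult_eq_iterated:
  assumes "continuous_on {-1..1} \<psi>"
  shows "integral {-1..1} (\<lambda>x. G p x y * \<psi> x)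
    = integral {-1..1} (\<lambda>z. ReLU_pow p (z - y) * integral {-1..1} (\<lambda>x. ReLU_pow p (z - x) * \<psi> x))"
proof -
  have cont: "continuous_on (cbox (-1, -1) (1, 1))
      (\<lambda>(x, z). ReLU_pow p (z - x) * ReLU_pow p (z - y) * \<psi> x)"
    unfolding case_prod_beta'
    by (intro continuous_intros continuous_on_compose2[OF assms]) (auto simp: cbox_Pair_eq)
  have "integral {-1..1} (\<lambda>x. G p x y * \<psi> x)
      = integral {-1..1} (\<lambda>x. integral {-1..1} (\<lambda>z. ReLU_pow p (z - x) * ReLU_pow p (z - y) * \<psi> x))"
    by (simp add: G_def)
  also have "\<dots> = integral {-1..1} (\<lambda>z. integral {-1..1} (\<lambda>x. ReLU_pow p (z - x) * ReLU_pow p (z - y) * \<psi> x))"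
    using integral_swap_continuous[OF cont] by (simp only: cbox_interval)
  also have "\<dots> = integral {-1..1} (\<lambda>z. ReLU_pow p (z - y) * integral {-1..1} (\<lambda>x. ReLU_pow p (z - x) * \<psi> x))"
  proof (rule integral_cong)
    fix z
    have "(\<lambda>x. ReLU_pow p (z - x) * ReLU_pow p (z - y) * \<psi> x)
        = (\<lambda>x. ReLU_pow p (z - y) * (ReLU_pow p (z - x) * \<psi> x))"
      by (simp add: fun_eq_iff mult_ac)
    then show "integral {-1..1} (\<lambda>x. ReLU_pow p (z - x) * ReLU_pow p (z - y) * \<psi> x)
        = ReLU_pow p (z - y) * integral {-1..1} (\<lambda>x. ReLU_pow p (z - x) * \<psi> x)"
      by simp
  qed
  finally show ?thesis .
qed

theorem lemma1:
  fixes p :: nat and y :: real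
  assumes "p \<ge> 1" and "y \<in> {-1..1}"
  shows "\<forall>\<phi>. test_fun \<phi> \<longrightarrow>
    integral {-1..1} (\<lambda>x. G p x y * (deriv ^^ (2*p+2)) \<phi> x)
      = (-1) ^ (p - 1) * (fact p)^2 * \<phi> y"
proof (intro allI impI)
  fix \<phi> :: "real \<Rightarrow> real"
  assume \<phi>: "test_fun \<phi>"
  define D where "D k = (deriv ^^ k) \<phi>" for k
  have dD: "\<And>k x. (D k has_real_derivative D (Suc k) x) (at x)"
    using test_fun_higher_deriv_has_derivative[OF \<phi>] by (simp add: D_def)
  have D_boundary: "D k (-1) = 0" "D k 1 = 0" for k
    using test_fun_higher_deriv_eq_0[OF \<phi>] by (simp_all add: D_def)
  have inner: "integral {-1..1} (\<lambda>x. ReLU_pow p (z - x) * D (2*p+2) x) = fact p * D (Suc p) z"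
    if "z \<in> {-1..1}" for z
  proof -
    have "((\<lambda>x. ReLU_pow p (z - x) * D (Suc p + Suc p) x) has_integral fact p * D (0 + Suc p) z) {-1..1}"
      by (rule has_integral_ReLU_pow_mult_deriv_chain_upper[of p "\<lambda>k. D (k + Suc p)"])
        (use \<open>p \<ge> 1\<close> dD D_boundary that in auto)
    then show ?thesis by (simp add: integral_unique mult_2)
  qed
  have "integral {-1..1} (\<lambda>x. G p x y * D (2*p+2) x)
      = integral {-1..1} (\<lambda>z. ReLU_pow p (z - y) * integral {-1..1} (\<lambda>x. ReLU_pow p (z - x) * D (2*p+2) x))"
    by (intro integral_G_mult_eq_iterated continuous_at_imp_continuous_on ballI DERIV_isCont[OF dD])
  also have "\<dots> = integral {-1..1} (\<lambda>z. ReLU_pow p (z - y) * D (Suc p) z * fact p)"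
    by (rule integral_cong) (simp only: inner, simp)
  also have "\<dots> = (-1) ^ Suc p * fact p * D 0 y * fact p"
    using has_integral_ReLU_pow_mult_deriv_chain_lower[of p D 1 "-1" y, OF \<open>p \<ge> 1\<close> dD D_boundary(2)] assms(2)
    by (simp add: integral_unique)
  also have "\<dots> = (-1) ^ (p - 1) * (fact p)^2 * \<phi> y"
    using \<open>p \<ge> 1\<close> by (cases p) (simp_all add: D_def power2_eq_square)
  finally show "integral {-1..1} (\<lambda>x. G p x y * (deriv ^^ (2*p+2)) \<phi> x)
      = (-1) ^ (p - 1) * (fact p)^2 * \<phi> y"
    by (simp add: D_def)
qed

end
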